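(* Let $0<\alpha<1/2$, let $M>0$ and let $k:=\prod_{p\le M}p$ (product over primes). For every positive divisor $c$ of $k$, \[ \frac{1}{k^2}\sum_{d\mid k}(c,d)^{2\alpha}\Bigl(\phi\bigl(\tfrac kc\bigr)\phi\bigl(\tfrac kd\bigr)\Bigr)^{\alpha}\bigl(\phi(c)\phi(d)\bigr)^{1-\alpha}=\prod_{p\mid k}\Bigl(\frac1p\Bigl(1-\frac1p\Bigr)+\Bigl(1-\frac1p\Bigr)^{2-2\alpha}\Bigr)\frac{c}{k}\,f\Bigl(\frac kc\Bigr). \] Moreover, \[ \frac{1}{k^2}\sum_{c,d\mid k}(c,d)^{2\alpha}\Bigl(\phi\bigl(\tfrac kc\bigr)\phi\bigl(\tfrac kd\bigr)\Bigr)^{\alpha}\bigl(\phi(c)\phi(d)\bigr)^{1-\alpha}=\prod_{p\mid k}\Bigl(p^{2\alpha-2}\Bigl(1-\frac1p\Bigr)^{2\alpha}+\frac2p\Bigl(1-\frac1p\Bigr)+\Bigl(1-\frac1p\Bigr)^{2-2\alpha}\Bigr). \]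
   Context: $\phi$ is Euler's totient function, $(c,d)$ is the greatest common divisor, sums over $d\mid k$ run over positive divisors, and products over $p$ run over primes. The multiplicative function $f$ is defined by \[ f(n):=\prod_{p\mid n}\frac{p^{2\alpha-1}\bigl(1-\frac1p\bigr)^{2\alpha}+\bigl(1-\frac1p\bigr)}{\frac1p\bigl(1-\frac1p\bigr)+\bigl(1-\frac1p\bigr)^{2-2\alpha}}. \] *)

theory Defs
  imports Complex_Main "HOL-Number_Theory.Number_Theory"
begin

definition f_fun :: "real \<Rightarrow> nat \<Rightarrow> real" where
  "f_fun \<alpha> n = (\<Prod>p\<in>prime_factors n.
      (real p powr (2*\<alpha>-1) * (1 - 1/real p) powr (2*\<alpha>) + (1 - 1/real p)) /
      ((1/real p) * (1 - 1/real p) + (1 - 1/real p) powr (2 - 2*\<alpha>)))"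

end

theory Submission
  imports Defs "HOL-Computational_Algebra.Squarefree"
begin

text \<open>Since k is squarefree, its divisors are the products \<open>\<Prod>T\<close> over the subsets T of its prime
  factors, and the summand for c = \<Prod>T, d = \<Prod>S factors as a product over the primes p dividing k
  of a local weight depending only on whether p divides c and whether p divides d. Summing a
  product of such weights over all subsets S (and T) gives a product of two-term (four-term) sums,
  which are evaluated prime by prime.\<close>

lemma prime_factors_prod_primes:
  fixes S :: "nat set"
  assumes "finite S" "\<And>p. p \<in> S \<Longrightarrow> prime p"
  shows "prime_factors (\<Prod>S) = S"
proof -
  have "0 \<notin> S" using assms(2) not_prime_0 by blast
  then have "prime_factors (prod id S) = \<Union>((prime_factors \<circ> id) ` S)"
    using assms(1) by (intro prime_factors_prod) auto
  then show ?thesis using assms by (simp add: prime_prime_factors)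
qed

lemma gcd_prod_primes:
  fixes S T :: "nat set"
  assumes "finite S" "finite T" "\<And>p. p \<in> S \<union> T \<Longrightarrow> prime p"
  shows "gcd (\<Prod>S) (\<Prod>T) = \<Prod>(S \<inter> T)"
proof -
  have "S - (S \<inter> T) = S - T" "T - (S \<inter> T) = T - S" by blast+
  then have "\<Prod>S = \<Prod>(S \<inter> T) * \<Prod>(S - T)" "\<Prod>T = \<Prod>(S \<inter> T) * \<Prod>(T - S)"
    using prod.subset_diff[of "S \<inter> T" S "\<lambda>x. x"] prod.subset_diff[of "S \<inter> T" T "\<lambda>x. x"] assms(1,2)
    by (simp_all add: mult.commute)
  then have "gcd (\<Prod>S) (\<Prod>T) = \<Prod>(S \<inter> T) * gcd (\<Prod>(S - T)) (\<Prod>(T - S))"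
    by (simp add: gcd_mult_left)
  moreover have "coprime (\<Prod>(S - T)) (\<Prod>(T - S))"
    using assms by (intro prod_coprime_left prod_coprime_right primes_coprime) auto
  ultimately show ?thesis by simp
qed

lemma totient_prod_primes:
  fixes S :: "nat set"
  assumes "finite S" "\<And>p. p \<in> S \<Longrightarrow> prime p"
  shows "real (totient (\<Prod>S)) = (\<Prod>p\<in>S. real p - 1)"
proof -
  have "totient (prod id S) = (\<Prod>p\<in>S. totient (id p))"
    using assms by (intro totient_prod_coprime) (auto simp: pairwise_def primes_coprime)
  also have "\<dots> = (\<Prod>p\<in>S. p - 1)"
    using assms by (simp add: totient_prime)
  finally have "real (totient (\<Prod>S)) = (\<Prod>p\<in>S. real (p - 1))"
    by simp
  also have "\<dots> = (\<Prod>p\<in>S. real p - 1)"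
    using assms(2) prime_ge_1_nat by (intro prod.cong) (simp_all add: of_nat_diff)
  finally show ?thesis .
qed

lemma dvd_prod_primes_imp_prod_prime_factors:
  fixes P :: "nat set"
  assumes "finite P" "\<And>p. p \<in> P \<Longrightarrow> prime p" "d dvd \<Prod>P"
  shows "prime_factors d \<subseteq> P \<and> d = \<Prod>(prime_factors d)"
proof
  have "0 \<notin> P" using assms(2) not_prime_0 by blast
  then have "\<Prod>P \<noteq> 0" using assms(1) by simp
  with assms(3) have "d \<noteq> 0" by auto
  have "prime_factors d \<subseteq> prime_factors (\<Prod>P)"
    using \<open>\<Prod>P \<noteq> 0\<close> assms(3) by (rule dvd_prime_factors)
  then show "prime_factors d \<subseteq> P"
    using prime_factors_prod_primes[OF assms(1,2)] by simp
  have "squarefree (prod id P)"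
    using assms(2) by (intro squarefree_prod_coprime) (auto simp: primes_coprime squarefree_prime)
  then have "squarefree d" using assms(3) squarefree_mono by simp
  then have multiplicity_one: "\<forall>p\<in>prime_factors d. multiplicity p d = 1"
    using squarefree_factorial_semiring'[OF \<open>d \<noteq> 0\<close>] by blast
  have "d = (\<Prod>p\<in>prime_factors d. p ^ multiplicity p d)"
    using prod_prime_factors[OF \<open>d \<noteq> 0\<close>] by simp
  also have "\<dots> = \<Prod>(prime_factors d)"
    using multiplicity_one by (intro prod.cong) auto
  finally show "d = \<Prod>(prime_factors d)" .
qed

lemma bij_betw_prod_Pow_divisors:
  fixes P :: "nat set"
  assumes "finite P" "\<And>p. p \<in> P \<Longrightarrow> prime p"
  shows "bij_betw Prod (Pow P) {d. d dvd \<Prod>P}"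
proof (rule bij_betw_imageI)
  show "inj_on Prod (Pow P)"
  proof (rule inj_onI)
    fix S S' assume "S \<in> Pow P" "S' \<in> Pow P" "\<Prod>S = \<Prod>S'"
    moreover have "prime_factors (\<Prod>X) = X" if "X \<in> Pow P" for X
      using that assms by (intro prime_factors_prod_primes) (auto intro: finite_subset)
    ultimately show "S = S'" by metis
  qed
  show "Prod ` Pow P = {d. d dvd \<Prod>P}"
  proof
    show "Prod ` Pow P \<subseteq> {d. d dvd \<Prod>P}"
      using assms(1) by (auto intro: prod_dvd_prod_subset)
    show "{d. d dvd \<Prod>P} \<subseteq> Prod ` Pow P"
      using dvd_prod_primes_imp_prod_prime_factors[OF assms] by blast
  qed
qed

lemma sum_divisors_prod_primes:
  fixes P :: "nat set" and g :: "nat \<Rightarrow> 'a::comm_monoid_add"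
  assumes "finite P" "\<And>p. p \<in> P \<Longrightarrow> prime p"
  shows "(\<Sum>d\<in>{d. d dvd \<Prod>P}. g d) = (\<Sum>S\<in>Pow P. g (\<Prod>S))"
  by (rule sum.reindex_bij_betw[OF bij_betw_prod_Pow_divisors[OF assms], symmetric])

lemma sum_Pow_prod_mem:
  fixes h :: "'a \<Rightarrow> bool \<Rightarrow> 'b::comm_semiring_1"
  assumes "finite A"
  shows "(\<Sum>X\<in>Pow A. \<Prod>x\<in>A. h x (x \<in> X)) = (\<Prod>x\<in>A. h x True + h x False)"
proof -
  have "(\<Prod>x\<in>A. h x (x \<in> X)) = (\<Prod>x\<in>X. h x True) * (\<Prod>x\<in>A - X. h x False)"
    if "X \<in> Pow A" for X
  proof -
    have "(\<Prod>x\<in>A. h x (x \<in> X)) = (\<Prod>x\<in>A - X. h x (x \<in> X)) * (\<Prod>x\<in>X. h x (x \<in> X))"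
      using that assms by (intro prod.subset_diff) auto
    moreover have "(\<Prod>x\<in>A - X. h x (x \<in> X)) = (\<Prod>x\<in>A - X. h x False)"
      by (rule prod.cong) auto
    moreover have "(\<Prod>x\<in>X. h x (x \<in> X)) = (\<Prod>x\<in>X. h x True)"
      by (rule prod.cong) auto
    ultimately show ?thesis by (simp add: mult.commute)
  qed
  then show ?thesis by (simp add: prod_add[OF assms])
qed

lemma prod_subset_eq_prod_if:
  fixes g :: "'a \<Rightarrow> 'b::comm_monoid_mult"
  assumes "finite A" "X \<subseteq> A"
  shows "(\<Prod>x\<in>X. g x) = (\<Prod>x\<in>A. if x \<in> X then g x else 1)"
proof -
  have "X = {x \<in> A. x \<in> X}" using assms(2) by blast
  then show ?thesis using prod.inter_filter[OF assms(1)] by metis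
qed

text \<open>The local factor at a prime x of the summand divided by \<open>x\<^sup>2\<close>; t and s record whether x divides
  c and d.\<close>
definition divisor_weight :: "real \<Rightarrow> real \<Rightarrow> bool \<Rightarrow> bool \<Rightarrow> real" where
  "divisor_weight a x t s =
     (if t \<and> s then (1 - 1/x) powr (2 - 2*a)
      else if t \<or> s then 1/x * (1 - 1/x)
      else x powr (2*a - 2) * (1 - 1/x) powr (2*a))"

lemma divisor_weight_eq:
  fixes a x :: real
  assumes "x > 1"
  shows "x^2 * divisor_weight a x t s =
    (if t \<and> s then x powr (2*a) else 1) *
    ((if t then 1 else x - 1) * (if s then 1 else x - 1)) powr a *
    ((if t then x - 1 else 1) * (if s then x - 1 else 1)) powr (1 - a)"
proof -
  define y where "y = x - 1"
  have "y > 0" and one_minus: "1 - 1/x = y / x" using assms by (auto simp: y_def field_simps)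
  have x_scale: "x^2 / x powr (2 - b) = x powr b" for b
  proof -
    have "x^2 = x powr 2" using assms by (simp add: powr_numeral)
    then show ?thesis using assms by (simp add: powr_diff)
  qed
  have y_square: "(y * y) powr b = y powr (2*b)" for b
    using \<open>y > 0\<close> by (simp add: powr_mult powr_add[symmetric])
  have both: "x^2 * (y/x) powr (2 - 2*a) = x powr (2*a) * (y * y) powr (1 - a)"
  proof -
    have "x^2 * (y/x) powr (2 - 2*a) = x^2 / x powr (2 - 2*a) * y powr (2 - 2*a)"
      using assms \<open>y > 0\<close> by (simp add: powr_divide)
    also have "\<dots> = x powr (2*a) * y powr (2 * (1 - a))"
      by (simp add: x_scale)
    finally show ?thesis by (simp add: y_square)
  qed
  have one: "x^2 * (1/x * (y/x)) = y powr a * y powr (1 - a)"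
    using assms \<open>y > 0\<close> by (simp add: powr_add[symmetric] power2_eq_square)
  have neither: "x^2 * (x powr (2*a - 2) * (y/x) powr (2*a)) = (y * y) powr a"
  proof -
    have "x powr (2*a - 2) = 1 / x powr (2 - 2*a)"
      using assms by (simp add: powr_minus_divide[symmetric])
    then have "x^2 * (x powr (2*a - 2) * (y/x) powr (2*a))
        = x^2 / x powr (2 - 2*a) * (y powr (2*a) / x powr (2*a))"
      using assms \<open>y > 0\<close> by (simp add: powr_divide)
    also have "\<dots> = y powr (2*a)"
      using assms by (simp add: x_scale)
    finally show ?thesis by (simp add: y_square)
  qed
  show ?thesis
    using both one neither
    by (cases t; cases s) (simp_all add: divisor_weight_def one_minus flip: y_def)
qed

definition divisor_term :: "real \<Rightarrow> nat \<Rightarrow> nat \<Rightarrow> nat \<Rightarrow> real" where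
  "divisor_term a k c d =
     real (gcd c d) powr (2*a) *
     (real (totient (k div c)) * real (totient (k div d))) powr a *
     (real (totient c) * real (totient d)) powr (1 - a)"

lemma divisor_term_prod_primes:
  fixes P T S :: "nat set"
  assumes "finite P" "\<And>p. p \<in> P \<Longrightarrow> prime p" "T \<subseteq> P" "S \<subseteq> P"
  shows "divisor_term a (\<Prod>P) (\<Prod>T) (\<Prod>S) / (real (\<Prod>P))^2
    = (\<Prod>p\<in>P. divisor_weight a (real p) (p \<in> T) (p \<in> S))"
proof -
  have subset_primes: "finite X" "\<And>p. p \<in> X \<Longrightarrow> prime p" if "X \<subseteq> P" for X
    using that assms(1,2) finite_subset by auto
  have gcd: "real (gcd (\<Prod>T) (\<Prod>S)) = (\<Prod>p\<in>P. if p \<in> T \<and> p \<in> S then real p else 1)"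
  proof -
    have "gcd (\<Prod>T) (\<Prod>S) = \<Prod>(T \<inter> S)"
      using subset_primes assms(3,4) by (intro gcd_prod_primes) auto
    then show ?thesis
      using prod_subset_eq_prod_if[OF assms(1), of "T \<inter> S" real] assms(3) by auto
  qed
  have totient: "real (totient (\<Prod>X)) = (\<Prod>p\<in>P. if p \<in> X then real p - 1 else 1)"
    if "X \<subseteq> P" for X
    using totient_prod_primes[OF subset_primes[OF that]] prod_subset_eq_prod_if[OF assms(1) that]
    by simp
  have cototient: "real (totient (\<Prod>P div \<Prod>X)) = (\<Prod>p\<in>P. if p \<in> X then 1 else real p - 1)"
    if "X \<subseteq> P" for X
  proof -
    have "\<Prod>X \<noteq> 0" using subset_primes[OF that] not_prime_0 by (metis prod_zero_iff)
    moreover have "\<Prod>P = \<Prod>(P - X) * \<Prod>X" using prod.subset_diff[OF that assms(1)] .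
    ultimately have "\<Prod>P div \<Prod>X = \<Prod>(P - X)" by simp
    then show ?thesis
      using totient[of "P - X"] by simp (intro prod.cong, auto)
  qed
  have "divisor_term a (\<Prod>P) (\<Prod>T) (\<Prod>S) = (\<Prod>p\<in>P.
      (if p \<in> T \<and> p \<in> S then real p powr (2*a) else 1) *
      ((if p \<in> T then 1 else real p - 1) * (if p \<in> S then 1 else real p - 1)) powr a *
      ((if p \<in> T then real p - 1 else 1) * (if p \<in> S then real p - 1 else 1)) powr (1 - a))"
    unfolding divisor_term_def gcd totient[OF assms(3)] totient[OF assms(4)]
      cototient[OF assms(3)] cototient[OF assms(4)] prod_powr_distrib prod.distrib[symmetric]
    by (intro prod.cong) auto
  also have "\<dots> = (\<Prod>p\<in>P. (real p)^2 * divisor_weight a (real p) (p \<in> T) (p \<in> S))"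
    using assms(2) prime_gt_1_nat by (intro prod.cong refl divisor_weight_eq[symmetric]) simp
  also have "\<dots> = (real (\<Prod>P))^2 * (\<Prod>p\<in>P. divisor_weight a (real p) (p \<in> T) (p \<in> S))"
    by (simp add: prod.distrib prod_power_distrib)
  moreover have "real (\<Prod>P) \<noteq> 0"
    using assms(1) assms(2)[of 0] by auto
  ultimately show ?thesis by simp
qed

lemma divisor_term_row_sum_prod_primes:
  fixes P T :: "nat set"
  assumes "finite P" "\<And>p. p \<in> P \<Longrightarrow> prime p" "T \<subseteq> P"
  shows "(\<Sum>d\<in>{d. d dvd \<Prod>P}. divisor_term a (\<Prod>P) (\<Prod>T) d) / (real (\<Prod>P))^2
    = (\<Prod>p\<in>P. divisor_weight a (real p) (p \<in> T) True + divisor_weight a (real p) (p \<in> T) False)"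
proof -
  have "(\<Sum>d\<in>{d. d dvd \<Prod>P}. divisor_term a (\<Prod>P) (\<Prod>T) d) / (real (\<Prod>P))^2
      = (\<Sum>S\<in>Pow P. divisor_term a (\<Prod>P) (\<Prod>T) (\<Prod>S) / (real (\<Prod>P))^2)"
    by (simp add: sum_divisors_prod_primes[OF assms(1,2)] sum_divide_distrib)
  also have "\<dots> = (\<Sum>S\<in>Pow P. \<Prod>p\<in>P. divisor_weight a (real p) (p \<in> T) (p \<in> S))"
    using divisor_term_prod_primes[OF assms] by (intro sum.cong) auto
  also have "\<dots> = (\<Prod>p\<in>P. divisor_weight a (real p) (p \<in> T) True + divisor_weight a (real p) (p \<in> T) False)"
    by (rule sum_Pow_prod_mem[OF assms(1)])
  finally show ?thesis .
qed

lemma divisor_weight_sum_not_mem: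
  fixes a x :: real
  assumes "x > 1"
  shows "divisor_weight a x False True + divisor_weight a x False False
    = 1/x * (x powr (2*a - 1) * (1 - 1/x) powr (2*a) + (1 - 1/x))"
proof -
  have "x powr (2*a - 2) = x powr (2*a - 1) / x"
    using powr_diff[of x "2*a - 1" 1] assms by simp
  then show ?thesis by (simp add: divisor_weight_def algebra_simps)
qed

lemma divisor_term_sum_prod_primes:
  fixes P T :: "nat set"
  assumes "finite P" "\<And>p. p \<in> P \<Longrightarrow> prime p" "T \<subseteq> P"
  shows "1 / (real (\<Prod>P))^2 * (\<Sum>d\<in>{d. d dvd \<Prod>P}. divisor_term a (\<Prod>P) (\<Prod>T) d)
    = (\<Prod>p\<in>P. 1/real p * (1 - 1/real p) + (1 - 1/real p) powr (2 - 2*a))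
      * (real (\<Prod>T) / real (\<Prod>P)) * f_fun a (\<Prod>P div \<Prod>T)"
proof -
  define D where "D p = 1/real p * (1 - 1/real p) + (1 - 1/real p) powr (2 - 2*a)" for p
  define N where "N p = real p powr (2*a - 1) * (1 - 1/real p) powr (2*a) + (1 - 1/real p)" for p
  have "finite T" "0 \<notin> T" using assms(1,3) assms(2)[of 0] finite_subset by auto
  then have "\<Prod>T \<noteq> 0" by simp
  have "\<Prod>P = \<Prod>(P - T) * \<Prod>T" using prod.subset_diff[OF assms(3,1)] .
  then have quotient: "\<Prod>P div \<Prod>T = \<Prod>(P - T)"
    and "real (\<Prod>T) / real (\<Prod>P) = 1 / real (\<Prod>(P - T))"
    using \<open>\<Prod>T \<noteq> 0\<close> by (simp_all del: of_nat_prod)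
  have outside_T: "(\<Prod>p\<in>P - T. g p) = (\<Prod>p\<in>P. if p \<in> T then 1 else g p)" for g :: "nat \<Rightarrow> real"
    using prod_subset_eq_prod_if[OF assms(1), of "P - T" g] by simp (intro prod.cong, auto)
  have ratio: "real (\<Prod>T) / real (\<Prod>P) = (\<Prod>p\<in>P. if p \<in> T then 1 else 1 / real p)"
    using \<open>real (\<Prod>T) / real (\<Prod>P) = 1 / real (\<Prod>(P - T))\<close>
    by (simp add: outside_T[symmetric] prod_dividef)
  have "f_fun a (\<Prod>P div \<Prod>T) = (\<Prod>p\<in>P - T. N p / D p)"
    unfolding quotient f_fun_def N_def D_def using assms(1,2)
    by (subst prime_factors_prod_primes) auto
  then have "(\<Prod>p\<in>P. D p) * (real (\<Prod>T) / real (\<Prod>P)) * f_fun a (\<Prod>P div \<Prod>T)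
      = (\<Prod>p\<in>P. D p * (if p \<in> T then 1 else 1 / real p) * (if p \<in> T then 1 else N p / D p))"
    by (simp only: ratio outside_T prod.distrib)
  also have "\<dots> = (\<Prod>p\<in>P. divisor_weight a (real p) (p \<in> T) True + divisor_weight a (real p) (p \<in> T) False)"
  proof (intro prod.cong refl)
    fix p assume "p \<in> P"
    then have "real p > 1" using assms(2) prime_gt_1_nat by auto
    moreover have "D p > 0" unfolding D_def using \<open>real p > 1\<close> by (auto intro!: add_pos_nonneg)
    ultimately show "D p * (if p \<in> T then 1 else 1 / real p) * (if p \<in> T then 1 else N p / D p)
        = divisor_weight a (real p) (p \<in> T) True + divisor_weight a (real p) (p \<in> T) False"
      by (cases "p \<in> T") (simp_all add: D_def N_def divisor_weight_sum_not_mem, simp add: divisor_weight_def)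
  qed
  finally show ?thesis
    using divisor_term_row_sum_prod_primes[OF assms] by (simp add: D_def)
qed

lemma divisor_term_double_sum_prod_primes:
  fixes P :: "nat set"
  assumes "finite P" "\<And>p. p \<in> P \<Longrightarrow> prime p"
  shows "1 / (real (\<Prod>P))^2 * (\<Sum>c\<in>{c. c dvd \<Prod>P}. \<Sum>d\<in>{d. d dvd \<Prod>P}. divisor_term a (\<Prod>P) c d)
    = (\<Prod>p\<in>P. real p powr (2*a - 2) * (1 - 1/real p) powr (2*a)
         + 2/real p * (1 - 1/real p) + (1 - 1/real p) powr (2 - 2*a))"
proof -
  have "1 / (real (\<Prod>P))^2 * (\<Sum>c\<in>{c. c dvd \<Prod>P}. \<Sum>d\<in>{d. d dvd \<Prod>P}. divisor_term a (\<Prod>P) c d)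
      = (\<Sum>T\<in>Pow P. \<Prod>p\<in>P. divisor_weight a (real p) (p \<in> T) True + divisor_weight a (real p) (p \<in> T) False)"
    using divisor_term_row_sum_prod_primes[OF assms]
    by (simp add: sum_divisors_prod_primes[OF assms] sum_divide_distrib)
  also have "\<dots> = (\<Prod>p\<in>P. (divisor_weight a (real p) True True + divisor_weight a (real p) True False)
      + (divisor_weight a (real p) False True + divisor_weight a (real p) False False))"
    by (rule sum_Pow_prod_mem[OF assms(1)])
  also have "\<dots> = (\<Prod>p\<in>P. real p powr (2*a - 2) * (1 - 1/real p) powr (2*a)
         + 2/real p * (1 - 1/real p) + (1 - 1/real p) powr (2 - 2*a))"
  proof (intro prod.cong refl)
    fix p assume "p \<in> P"
    then have "real p \<noteq> 0" using assms(2) prime_gt_0_nat by fastforce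
    then show "(divisor_weight a (real p) True True + divisor_weight a (real p) True False)
        + (divisor_weight a (real p) False True + divisor_weight a (real p) False False)
      = real p powr (2*a - 2) * (1 - 1/real p) powr (2*a)
         + 2/real p * (1 - 1/real p) + (1 - 1/real p) powr (2 - 2*a)"
      by (simp add: divisor_weight_def field_simps)
  qed
  finally show ?thesis .
qed

theorem lemma6:
  fixes \<alpha> M :: real and k c :: nat
  assumes "0 < \<alpha>" and "\<alpha> < 1/2" and "M > 0"
    and "k = (\<Prod>p\<in>{p::nat. prime p \<and> real p \<le> M}. p)"
    and "c dvd k" and "c > 0"
  shows "((1 / (real k)^2) * (\<Sum>d\<in>{d. d dvd k}.
            real (gcd c d) powr (2*\<alpha>) *
            (real (totient (k div c)) * real (totient (k div d))) powr \<alpha> *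
            (real (totient c) * real (totient d)) powr (1 - \<alpha>))
         = (\<Prod>p\<in>prime_factors k. (1/real p) * (1 - 1/real p) + (1 - 1/real p) powr (2 - 2*\<alpha>))
           * (real c / real k) * f_fun \<alpha> (k div c))
    \<and> ((1 / (real k)^2) * (\<Sum>c'\<in>{c'. c' dvd k}. \<Sum>d\<in>{d. d dvd k}.
            real (gcd c' d) powr (2*\<alpha>) *
            (real (totient (k div c')) * real (totient (k div d))) powr \<alpha> *
            (real (totient c') * real (totient d)) powr (1 - \<alpha>))
         = (\<Prod>p\<in>prime_factors k. real p powr (2*\<alpha> - 2) * (1 - 1/real p) powr (2*\<alpha>)
              + (2/real p) * (1 - 1/real p) + (1 - 1/real p) powr (2 - 2*\<alpha>)))"
proof -
  define P where "P = {p::nat. prime p \<and> real p \<le> M}"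
  have "P \<subseteq> {..nat \<lceil>M\<rceil>}"
    unfolding P_def by (auto simp: le_nat_iff le_ceiling_iff)
  then have "finite P" by (rule finite_subset) simp
  have primes: "\<And>p. p \<in> P \<Longrightarrow> prime p" by (simp add: P_def)
  have k: "k = \<Prod>P" using assms(4) by (simp add: P_def)
  have "prime_factors k = P" unfolding k using \<open>finite P\<close> primes by (rule prime_factors_prod_primes)
  moreover obtain T where "T \<subseteq> P" "c = \<Prod>T"
    using dvd_prod_primes_imp_prod_prime_factors[OF \<open>finite P\<close> primes] assms(5) k by blast
  ultimately show ?thesis
    unfolding divisor_term_def[symmetric] k
    using divisor_term_sum_prod_primes[OF \<open>finite P\<close> primes \<open>T \<subseteq> P\<close>]
      divisor_term_double_sum_prod_primes[OF \<open>finite P\<close> primes]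
    by simp
qed

end
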